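(* Let $r\ge 2$ and $m$ be integers with $0\le 2m\le r$, and let $M_m\subseteq\mathbb{P}S^r(\mathbb{C}^2)=\mathbb{P}^r$ be the variety defined in the context. Then $\dim(M_m)<2m$. In particular, if $m=0$ then $M_m=\emptyset$.
   Context: $S^r(\mathbb{C}^2)$ is the irreducible $\mathfrak{sl}_2(\mathbb{C})$-module (equivalently $PGL_2$/$SL_2(\mathbb{C})$-module) of binary forms of degree $r$, and $S^2(S^r(\mathbb{C}^2))\cong\bigoplus_{m'\ge 0,\ 4m'\le 2r}S^{2r-4m'}(\mathbb{C}^2)$ as $\mathfrak{sl}_2(\mathbb{C})$-modules. Let $f_m:S^2(S^r(\mathbb{C}^2))\to S^{2r-4m}(\mathbb{C}^2)$ be the (nonzero, $\mathfrak{sl}_2(\mathbb{C})$-equivariant) projection onto the summand $S^{2r-4m}(\mathbb{C}^2)$, and $M_m=\{[x]\in\mathbb{P}S^r(\mathbb{C}^2): f_m(xx)=0\}$, the projective variety cut out by the $2r-4m+1$ quadrics given by the coordinates of $f_m(xx)$. The empty set has dimension $-1$ (or $-\infty$). *)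

theory Defs
  imports Complex_Main "HOL-Library.Extended_Real"
begin

(* Binary forms of degree r: x = sum_{i=0..r} a i * X^(r-i) * Y^i, represented by the
   coefficient vector a :: nat => complex with a i = 0 for i > r  (so S^r(C^2) = C^(r+1)). *)
definition bform_space :: "nat \<Rightarrow> (nat \<Rightarrow> complex) set" where
  "bform_space r = {a. \<forall>i>r. a i = 0}"

(* falling factorial n(n-1)...(n-k+1); it is 0 when k > n *)
definition ff :: "nat \<Rightarrow> nat \<Rightarrow> nat" where
  "ff n k = (\<Prod>t<k. n - t)"

(* Coefficient of X^(2r-4m-k) Y^k in the 2m-th transvectant (x,x)_{2m}
     = sum_{j=0}^{2m} (-1)^j C(2m,j) (d_X^(2m-j) d_Y^j x) (d_X^j d_Y^(2m-j) x),
   which is (up to a nonzero scalar) the sl_2-equivariant projection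
   f_m : S^2(S^r C^2) -> S^(2r-4m) C^2 evaluated at x x. *)
definition transv :: "nat \<Rightarrow> nat \<Rightarrow> (nat \<Rightarrow> complex) \<Rightarrow> nat \<Rightarrow> complex" where
  "transv r m a k =
     (\<Sum>j\<le>2*m. \<Sum>i\<le>r. \<Sum>l\<le>r.
        if i + l = k + 2*m then
          (-1)^j * of_nat (2*m choose j)
          * of_nat (ff (r-i) (2*m-j) * ff i j * ff (r-l) j * ff l (2*m-j)) * a i * a l
        else 0)"

(* affine cone over M_m in C^(r+1) *)
definition Mcone :: "nat \<Rightarrow> nat \<Rightarrow> (nat \<Rightarrow> complex) set" where
  "Mcone r m = {a \<in> bform_space r. \<forall>k\<le>2*r-4*m. transv r m a k = 0}"

(* nonzero representatives of the points of M_m in P S^r(C^2) *)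
definition Mpts :: "nat \<Rightarrow> nat \<Rightarrow> (nat \<Rightarrow> complex) set" where
  "Mpts r m = {a \<in> Mcone r m. a \<noteq> (\<lambda>_. 0)}"

inductive_set poly_fun :: "((nat \<Rightarrow> complex) \<Rightarrow> complex) set" where
  pf_const: "(\<lambda>_. c) \<in> poly_fun"
| pf_var: "(\<lambda>a. a i) \<in> poly_fun"
| pf_add: "p \<in> poly_fun \<Longrightarrow> q \<in> poly_fun \<Longrightarrow> (\<lambda>a. p a + q a) \<in> poly_fun"
| pf_mult: "p \<in> poly_fun \<Longrightarrow> q \<in> poly_fun \<Longrightarrow> (\<lambda>a. p a * q a) \<in> poly_fun"

definition zar_closed :: "nat \<Rightarrow> (nat \<Rightarrow> complex) set \<Rightarrow> bool" where
  "zar_closed r Z \<longleftrightarrow> (\<exists>S \<subseteq> poly_fun. Z = {a \<in> bform_space r. \<forall>p\<in>S. p a = 0})"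

definition zar_irred :: "nat \<Rightarrow> (nat \<Rightarrow> complex) set \<Rightarrow> bool" where
  "zar_irred r Z \<longleftrightarrow> zar_closed r Z \<and> Z \<noteq> {} \<and>
     (\<forall>Z1 Z2. zar_closed r Z1 \<and> zar_closed r Z2 \<and> Z = Z1 \<union> Z2 \<longrightarrow> Z = Z1 \<or> Z = Z2)"

definition irred_chain :: "nat \<Rightarrow> (nat \<Rightarrow> complex) set \<Rightarrow> nat \<Rightarrow> bool" where
  "irred_chain r X k \<longleftrightarrow> (\<exists>Z :: nat \<Rightarrow> (nat \<Rightarrow> complex) set.
      (\<forall>i\<le>k. zar_irred r (Z i) \<and> Z i \<subseteq> X) \<and> (\<forall>i<k. Z i \<subset> Z (Suc i)))"

(* dimension of the projective variety whose affine cone is C: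
   (Krull dimension of the cone) - 1; the empty projective variety gets -1 *)
definition proj_dim :: "nat \<Rightarrow> (nat \<Rightarrow> complex) set \<Rightarrow> ereal" where
  "proj_dim r C = Sup ({-1} \<union> {ereal (real k) - 1 | k. irred_chain r C k})"

end

theory Submission
  imports Defs "HOL-Library.Function_Algebras" "HOL-Analysis.Derivative" "HOL-Computational_Algebra.Polynomial"
begin

(* Dimension is read off from the growth of Hilbert functions. Along a chain
   Z_0 < ... < Z_k of irreducible closed sets one finds (q + k choose k) polynomials of
   degree O(q) that are linearly independent on Z_k, a number growing like q^k.
   On the other hand M_m is invariant under the substitutions Y -> Y + sX, and for
   a form with a_0 <> 0 the transvectant equations determine each a_0^(2^l - 1) a_l
   as a polynomial in a_0, ..., a_(2m-1). Choosing s so that the sheared a_0 does not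
   vanish on Z_k, every polynomial of degree t agrees on Z_k, up to a nonzero factor,
   with a polynomial of degree O(t) in 2m coordinates; at most O(t^(2m)) of these are
   independent. Hence k <= 2m, i.e. dim M_m <= 2m - 1. For m = 0 the transvectant is
   x^2 itself, whose leading coefficient a_0^2 vanishes for all shears of x only if
   x = 0, so M_0 is empty. *)

section \<open>Linear independence of functions on a set\<close>

definition indep_on :: "'a set \<Rightarrow> (nat \<Rightarrow> 'a \<Rightarrow> complex) \<Rightarrow> nat \<Rightarrow> bool" where
  "indep_on Z h n \<longleftrightarrow> (\<forall>d. (\<forall>x\<in>Z. (\<Sum>j<n. d j * h j x) = 0) \<longrightarrow> (\<forall>j<n. d j = 0))"

lemma indep_on_inj:
  assumes "indep_on Z h n" "j1 < n" "j2 < n" "\<forall>x\<in>Z. h j1 x = h j2 x"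
  shows "j1 = j2"
proof (rule ccontr)
  assume ne: "j1 \<noteq> j2"
  define d where "d = (\<lambda>j. if j = j1 then (1::complex) else if j = j2 then -1 else 0)"
  have "(\<Sum>j<n. d j * h j x) = 0" if "x \<in> Z" for x
  proof -
    have "(\<Sum>j<n. d j * h j x) = (\<Sum>j\<in>{j1,j2}. d j * h j x)"
      by (rule sum.mono_neutral_right) (use assms(2,3) in \<open>auto simp: d_def\<close>)
    then show ?thesis using ne assms(4) that by (simp add: d_def)
  qed
  then have "d j1 = 0" using assms(1,2) unfolding indep_on_def by blast
  then show False by (simp add: d_def)
qed

lemma indep_on_restrict: "indep_on Z h n \<longleftrightarrow> indep_on UNIV (\<lambda>j x. if x \<in> Z then h j x else 0) n"
proof -
  have "(\<Sum>j<n. d j * (if x \<in> Z then h j x else 0)) = (if x \<in> Z then \<Sum>j<n. d j * h j x else 0)"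
    for d x by (cases "x \<in> Z") simp_all
  then show ?thesis unfolding indep_on_def by (simp add: Ball_def)
qed

lemma indep_on_UNIV_card_le:
  fixes g :: "'i \<Rightarrow> 'a \<Rightarrow> complex"
  assumes fin: "finite I"
    and span: "\<forall>j<n. \<exists>c. h j = (\<lambda>x. \<Sum>i\<in>I. c i * g i x)"
    and ind: "indep_on UNIV h n"
  shows "n \<le> card I"
proof -
  interpret V: vector_space "\<lambda>(c::complex) (f::'a \<Rightarrow> complex) x. c * f x"
    by unfold_locales (auto simp: fun_eq_iff algebra_simps)
  have sum_apply: "(\<Sum>v\<in>S. F v) x = (\<Sum>v\<in>S. F v x)"
    if "finite S" for S and F :: "'b \<Rightarrow> 'a \<Rightarrow> complex" and x
    using that by (induction S rule: finite_induct) auto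
  have inj: "inj_on h {..<n}"
  proof (rule inj_onI)
    fix j1 j2 assume "j1 \<in> {..<n}" "j2 \<in> {..<n}" "h j1 = h j2"
    then show "j1 = j2" by (intro indep_on_inj[OF ind]) auto
  qed
  have indep: "V.independent (h ` {..<n})"
  proof (rule V.independent_if_scalars_zero)
    fix f v assume s: "(\<Sum>w\<in>h ` {..<n}. (\<lambda>y. f w * w y)) = 0" and v: "v \<in> h ` {..<n}"
    define d where "d j = f (h j)" for j
    have "(\<Sum>j<n. d j * h j x) = (\<Sum>w\<in>h ` {..<n}. (\<lambda>y. f w * w y)) x" for x
      unfolding d_def by (simp add: sum_apply sum.reindex[OF inj])
    then have "\<forall>x\<in>UNIV. (\<Sum>j<n. d j * h j x) = 0" using s by simp
    then have "\<forall>j<n. d j = 0" using ind unfolding indep_on_def by blast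
    then show "f v = 0" using v unfolding d_def by auto
  qed simp
  have span: "h ` {..<n} \<subseteq> V.span (g ` I)"
  proof clarify
    fix j assume "j < n"
    with span obtain c where c: "h j = (\<lambda>x. \<Sum>i\<in>I. c i * g i x)" by blast
    have "(\<Sum>i\<in>I. (\<lambda>x. c i * g i x)) \<in> V.span (g ` I)"
      by (intro V.span_sum V.span_scale[where c="c _", simplified] V.span_base) simp
    moreover have "(\<Sum>i\<in>I. (\<lambda>x. c i * g i x)) = h j"
      unfolding c using fin by (simp add: sum_apply fun_eq_iff)
    ultimately show "h j \<in> V.span (g ` I)" by simp
  qed
  have "card (h ` {..<n}) \<le> card (g ` I)"
    using V.independent_span_bound[OF _ indep span] fin by simp
  then show ?thesis using card_image[OF inj] card_image_le[OF fin, of g] by simp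
qed

lemma indep_on_card_le:
  fixes g :: "'i \<Rightarrow> 'a \<Rightarrow> complex"
  assumes "finite I"
    and span: "\<forall>j<n. \<exists>c. \<forall>x\<in>Z. h j x = (\<Sum>i\<in>I. c i * g i x)"
    and "indep_on Z h n"
  shows "n \<le> card I"
proof (rule indep_on_UNIV_card_le[where g="\<lambda>i x. if x \<in> Z then g i x else 0"
    and h="\<lambda>j x. if x \<in> Z then h j x else 0"])
  show "\<forall>j<n. \<exists>c. (\<lambda>x. if x \<in> Z then h j x else 0) = (\<lambda>x. \<Sum>i\<in>I. c i * (if x \<in> Z then g i x else 0))"
  proof (intro allI impI)
    fix j assume "j < n"
    with span obtain c where c: "\<forall>x\<in>Z. h j x = (\<Sum>i\<in>I. c i * g i x)" by blast
    have "(if x \<in> Z then h j x else 0) = (\<Sum>i\<in>I. c i * (if x \<in> Z then g i x else 0))" for x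
      using c by (cases "x \<in> Z") simp_all
    then show "\<exists>c. (\<lambda>x. if x \<in> Z then h j x else 0) = (\<lambda>x. \<Sum>i\<in>I. c i * (if x \<in> Z then g i x else 0))"
      by (intro exI[of _ c] ext)
  qed
  show "indep_on UNIV (\<lambda>j x. if x \<in> Z then h j x else 0) n"
    using assms(3) by (rule indep_on_restrict[THEN iffD1])
qed (use assms(1) in simp)

lemma indep_on_singleton_le:
  assumes "Z \<subseteq> {z}" "indep_on Z h n"
  shows "n \<le> 1"
proof -
  have "n \<le> card {()}"
  proof (rule indep_on_card_le[where Z=Z and h=h and g="\<lambda>_ _. 1"])
    show "\<forall>j<n. \<exists>c. \<forall>x\<in>Z. h j x = (\<Sum>i\<in>{()}. c i * 1)"
    proof (intro allI impI)
      fix j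
      show "\<exists>c. \<forall>x\<in>Z. h j x = (\<Sum>i\<in>{()}. c i * 1)"
        using assms(1) by (intro exI[of _ "\<lambda>_. h j z"]) auto
    qed
  qed (use assms(2) in auto)
  then show ?thesis by simp
qed

section \<open>Polynomials of bounded degree in given functions\<close>

inductive gen_poly :: "('a \<Rightarrow> complex) set \<Rightarrow> nat \<Rightarrow> ('a \<Rightarrow> complex) \<Rightarrow> bool"
  for V :: "('a \<Rightarrow> complex) set" where
  const: "gen_poly V t (\<lambda>_. c)"
| add: "gen_poly V t f \<Longrightarrow> gen_poly V t g \<Longrightarrow> gen_poly V t (\<lambda>a. f a + g a)"
| mult: "v \<in> V \<Longrightarrow> gen_poly V t f \<Longrightarrow> gen_poly V (Suc t) (\<lambda>a. v a * f a)"
| lift: "gen_poly V t f \<Longrightarrow> gen_poly V (Suc t) f"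

lemma gen_poly_mono: "gen_poly V s f \<Longrightarrow> s \<le> t \<Longrightarrow> gen_poly V t f"
  by (induction t) (auto simp: le_Suc_eq intro: gen_poly.lift)

lemma gen_poly_generator: "v \<in> V \<Longrightarrow> gen_poly V 1 v"
  using gen_poly.mult[OF _ gen_poly.const[where c=1 and t=0]] by simp

lemma gen_poly_scale: "gen_poly V t f \<Longrightarrow> gen_poly V t (\<lambda>a. c * f a)"
proof (induction rule: gen_poly.induct)
  case const
  then show ?case by (rule gen_poly.const)
next
  case add
  then show ?case using gen_poly.add[OF add.IH] by (simp add: distrib_left)
next
  case mult
  then show ?case using gen_poly.mult[OF mult.hyps(1) mult.IH] by (simp add: ac_simps)
next
  case lift
  show ?case by (rule gen_poly.lift[OF lift.IH])
qed

lemma gen_poly_mult: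
  "gen_poly V s f \<Longrightarrow> gen_poly V t g \<Longrightarrow> gen_poly V (s + t) (\<lambda>a. f a * g a)"
proof (induction arbitrary: g rule: gen_poly.induct)
  case const
  then show ?case using gen_poly_mono[OF gen_poly_scale[OF const.prems]] by simp
next
  case add
  then show ?case using gen_poly.add[OF add.IH[OF add.prems]] by (simp add: distrib_right)
next
  case mult
  then show ?case using gen_poly.mult[OF mult.hyps(1) mult.IH[OF mult.prems]] by (simp add: ac_simps)
next
  case lift
  then show ?case using gen_poly.lift[OF lift.IH[OF lift.prems]] by simp
qed

lemma gen_poly_sum:
  "finite A \<Longrightarrow> (\<And>x. x \<in> A \<Longrightarrow> gen_poly V t (F x)) \<Longrightarrow> gen_poly V t (\<lambda>a. \<Sum>x\<in>A. F x a)"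
proof (induction A rule: finite_induct)
  case empty
  show ?case using gen_poly.const[where c=0] by simp
next
  case (insert x A)
  then show ?case using gen_poly.add[of V t "F x" "\<lambda>a. \<Sum>x\<in>A. F x a"] by simp
qed

lemma gen_poly_power: "gen_poly V s v \<Longrightarrow> gen_poly V (n * s) (\<lambda>a. v a ^ n)"
proof (induction n)
  case 0
  then show ?case using gen_poly.const[where c=1] by simp
next
  case (Suc n)
  then show ?case using gen_poly_mult[OF Suc.prems Suc.IH[OF Suc.prems]] by (simp add: add.commute)
qed

definition coord_funs :: "((nat \<Rightarrow> complex) \<Rightarrow> complex) set" where
  "coord_funs = range (\<lambda>i a. a i)"

lemma gen_poly_coord_funs_imp_poly_fun: "gen_poly coord_funs t f \<Longrightarrow> f \<in> poly_fun"
  by (induction rule: gen_poly.induct) (auto simp: coord_funs_def intro: poly_fun.intros)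

lemma poly_fun_imp_gen_poly: "f \<in> poly_fun \<Longrightarrow> \<exists>t. gen_poly coord_funs t f"
proof (induction rule: poly_fun.induct)
  case (pf_const c)
  then show ?case using gen_poly.const by blast
next
  case (pf_var i)
  have "(\<lambda>a. a i) \<in> coord_funs" by (simp add: coord_funs_def)
  then show ?case using gen_poly_generator by blast
next
  case (pf_add p q)
  then obtain s t where "gen_poly coord_funs s p" "gen_poly coord_funs t q" by blast
  then have "gen_poly coord_funs (s + t) p" "gen_poly coord_funs (s + t) q"
    by (auto intro: gen_poly_mono)
  then show ?case using gen_poly.add by blast
next
  case (pf_mult p q)
  then show ?case using gen_poly_mult by blast
qed

definition exponents :: "nat \<Rightarrow> nat \<Rightarrow> (nat \<Rightarrow> nat) set" where
  "exponents M D = PiE {..<M} (\<lambda>_. {..D})"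

lemma finite_exponents: "finite (exponents M D)"
  unfolding exponents_def by (intro finite_PiE) auto

lemma card_exponents: "card (exponents M D) = Suc D ^ M"
  unfolding exponents_def by (simp add: card_PiE)

lemma exponents_mono: "exponents M t \<subseteq> exponents M (Suc t)"
  unfolding exponents_def by (intro PiE_mono) auto

lemma mult_monomial_comb:
  fixes L :: "nat \<Rightarrow> 'a \<Rightarrow> complex"
  assumes w: "w < M"
  shows "\<exists>c'. \<forall>a. L w a * (\<Sum>\<alpha>\<in>exponents M t. c \<alpha> * (\<Prod>u<M. L u a ^ \<alpha> u))
                = (\<Sum>\<beta>\<in>exponents M (Suc t). c' \<beta> * (\<Prod>u<M. L u a ^ \<beta> u))"
proof -
  define sh where "sh \<alpha> = \<alpha>(w := Suc (\<alpha> w))" for \<alpha> :: "nat \<Rightarrow> nat"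
  have inj: "inj_on sh (exponents M t)"
  proof (rule inj_onI)
    fix x y assume "sh x = sh y"
    then have "(sh x)(w := sh x w - 1) = (sh y)(w := sh y w - 1)" by simp
    then show "x = y" by (simp add: sh_def)
  qed
  have sh_exponents: "sh ` exponents M t \<subseteq> exponents M (Suc t)"
  proof
    fix \<beta> assume "\<beta> \<in> sh ` exponents M t"
    then obtain \<alpha> where \<alpha>: "\<alpha> \<in> exponents M t" "\<beta> = sh \<alpha>" by blast
    then have "\<alpha> u \<le> t" if "u < M" for u using that unfolding exponents_def by auto
    moreover have "\<alpha> u = undefined" if "\<not> u < M" for u using \<alpha>(1) that unfolding exponents_def by auto
    ultimately show "\<beta> \<in> exponents M (Suc t)"
      unfolding exponents_def \<alpha>(2) sh_def using w by (intro PiE_I) (auto simp: le_SucI)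
  qed
  have sh_monomial: "(\<Prod>u<M. L u a ^ sh \<alpha> u) = L w a * (\<Prod>u<M. L u a ^ \<alpha> u)" for \<alpha> a
  proof -
    have wM: "w \<in> {..<M}" using w by simp
    have "(\<Prod>u\<in>{..<M} - {w}. L u a ^ sh \<alpha> u) = (\<Prod>u\<in>{..<M} - {w}. L u a ^ \<alpha> u)"
      by (intro prod.cong refl) (auto simp: sh_def)
    then show ?thesis
      unfolding prod.remove[OF finite_lessThan wM, of "\<lambda>u. L u a ^ _ u"] by (simp add: sh_def)
  qed
  define c' where "c' \<beta> = (if \<beta> \<in> sh ` exponents M t then c (inv_into (exponents M t) sh \<beta>) else 0)" for \<beta>
  have "(\<Sum>\<beta>\<in>exponents M (Suc t). c' \<beta> * (\<Prod>u<M. L u a ^ \<beta> u))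
      = L w a * (\<Sum>\<alpha>\<in>exponents M t. c \<alpha> * (\<Prod>u<M. L u a ^ \<alpha> u))" for a
  proof -
    have "(\<Sum>\<beta>\<in>exponents M (Suc t). c' \<beta> * (\<Prod>u<M. L u a ^ \<beta> u))
        = (\<Sum>\<beta>\<in>sh ` exponents M t. c' \<beta> * (\<Prod>u<M. L u a ^ \<beta> u))"
      using sh_exponents finite_exponents by (intro sum.mono_neutral_right) (auto simp: c'_def)
    also have "\<dots> = (\<Sum>\<alpha>\<in>exponents M t. c' (sh \<alpha>) * (\<Prod>u<M. L u a ^ sh \<alpha> u))"
      by (rule sum.reindex[OF inj, unfolded comp_def])
    also have "\<dots> = L w a * (\<Sum>\<alpha>\<in>exponents M t. c \<alpha> * (\<Prod>u<M. L u a ^ \<alpha> u))"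
      unfolding sum_distrib_left
      by (intro sum.cong refl) (simp add: c'_def inv_into_f_f[OF inj] sh_monomial)
    finally show ?thesis .
  qed
  then show ?thesis by metis
qed

lemma gen_poly_monomial_comb:
  fixes L :: "nat \<Rightarrow> 'a \<Rightarrow> complex"
  shows "gen_poly (L ` {..<M}) D f
    \<Longrightarrow> \<exists>c. \<forall>a. f a = (\<Sum>\<alpha>\<in>exponents M D. c \<alpha> * (\<Prod>u<M. L u a ^ \<alpha> u))"
proof (induction rule: gen_poly.induct)
  case (const t c)
  define z where "z = restrict (\<lambda>_. 0::nat) {..<M}"
  have z: "z \<in> exponents M t" unfolding z_def exponents_def by auto
  have "(\<Sum>\<alpha>\<in>exponents M t. (if \<alpha> = z then c else 0) * (\<Prod>u<M. L u a ^ \<alpha> u)) = c" for a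
  proof -
    have "(\<Sum>\<alpha>\<in>exponents M t. (if \<alpha> = z then c else 0) * (\<Prod>u<M. L u a ^ \<alpha> u))
        = (\<Sum>\<alpha>\<in>exponents M t. if \<alpha> = z then c * (\<Prod>u<M. L u a ^ \<alpha> u) else 0)"
      by (intro sum.cong refl) auto
    also have "\<dots> = c" using z finite_exponents by (simp add: z_def)
    finally show ?thesis .
  qed
  then show ?case by metis
next
  case (add t f g)
  then obtain c1 c2 where "\<forall>a. f a = (\<Sum>\<alpha>\<in>exponents M t. c1 \<alpha> * (\<Prod>u<M. L u a ^ \<alpha> u))"
    "\<forall>a. g a = (\<Sum>\<alpha>\<in>exponents M t. c2 \<alpha> * (\<Prod>u<M. L u a ^ \<alpha> u))" by blast
  then show ?case
    by (intro exI[of _ "\<lambda>\<alpha>. c1 \<alpha> + c2 \<alpha>"]) (simp add: distrib_right sum.distrib)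
next
  case (mult v t f)
  then obtain w c where "w < M" "v = L w" "\<forall>a. f a = (\<Sum>\<alpha>\<in>exponents M t. c \<alpha> * (\<Prod>u<M. L u a ^ \<alpha> u))"
    by blast
  with mult_monomial_comb[where L=L and w=w and t=t and c=c] show ?case by auto
next
  case (lift t f)
  then obtain c where c: "\<forall>a. f a = (\<Sum>\<alpha>\<in>exponents M t. c \<alpha> * (\<Prod>u<M. L u a ^ \<alpha> u))" by blast
  have "(\<Sum>\<alpha>\<in>exponents M (Suc t). (if \<alpha> \<in> exponents M t then c \<alpha> else 0) * (\<Prod>u<M. L u a ^ \<alpha> u))
      = (\<Sum>\<alpha>\<in>exponents M t. c \<alpha> * (\<Prod>u<M. L u a ^ \<alpha> u))" for a
    using exponents_mono finite_exponents by (intro sum.mono_neutral_cong_right) auto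
  then show ?case using c by metis
qed

section \<open>Growth of Hilbert functions along chains of irreducible sets\<close>

(* the Hilbert function of Z in degree t is at least n *)
definition indep_polys_on :: "(nat \<Rightarrow> complex) set \<Rightarrow> nat \<Rightarrow> nat \<Rightarrow> bool" where
  "indep_polys_on Z t n \<longleftrightarrow> (\<exists>h. (\<forall>j<n. gen_poly coord_funs t (h j)) \<and> indep_on Z h n)"

lemma indep_polys_on_1: "Z \<noteq> {} \<Longrightarrow> indep_polys_on Z t 1"
  unfolding indep_polys_on_def indep_on_def
  by (rule exI[of _ "\<lambda>_ _. 1"]) (auto intro: gen_poly.const)

lemma indep_polys_on_mono: "indep_polys_on Z s n \<Longrightarrow> s \<le> t \<Longrightarrow> indep_polys_on Z t n"
  unfolding indep_polys_on_def by (blast intro: gen_poly_mono)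

lemma zar_irred_mult_eq_0D:
  assumes Z: "zar_irred r Z" and f: "f \<in> poly_fun" and g: "g \<in> poly_fun"
    and fg: "\<forall>x\<in>Z. f x * g x = 0" and nf: "\<exists>x\<in>Z. f x \<noteq> 0"
  shows "\<forall>x\<in>Z. g x = 0"
proof -
  from Z obtain S where S: "S \<subseteq> poly_fun" "Z = {a \<in> bform_space r. \<forall>p\<in>S. p a = 0}"
    unfolding zar_irred_def zar_closed_def by blast
  define Z1 where "Z1 = {a \<in> bform_space r. \<forall>p\<in>insert f S. p a = 0}"
  define Z2 where "Z2 = {a \<in> bform_space r. \<forall>p\<in>insert g S. p a = 0}"
  have "zar_closed r Z1" unfolding zar_closed_def Z1_def using S f by blast
  moreover have "zar_closed r Z2" unfolding zar_closed_def Z2_def using S g by blast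
  moreover have "Z = Z1 \<union> Z2" using fg unfolding S(2) Z1_def Z2_def by auto
  ultimately have "Z = Z1 \<or> Z = Z2" using Z unfolding zar_irred_def by blast
  moreover have "Z \<noteq> Z1" using nf unfolding S(2) Z1_def by auto
  ultimately show ?thesis unfolding Z2_def by auto
qed

lemma sum_lessThan_add: "(\<Sum>j<a + b. F j) = (\<Sum>j<a. F j) + (\<Sum>j<b. F (a + j))"
  for F :: "nat \<Rightarrow> 'a::comm_monoid_add"
  by (induction b) (auto simp: add.assoc)

lemma indep_on_append:
  assumes "Z \<subseteq> Z'" "\<forall>x\<in>Z. f x = 0"
    and h: "indep_on Z' h n1" and k: "indep_on Z k n2"
    and cancel: "\<And>d. \<forall>x\<in>Z'. f x * (\<Sum>j<n1. d j * h j x) = 0 \<Longrightarrow> \<forall>x\<in>Z'. (\<Sum>j<n1. d j * h j x) = 0"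
  shows "indep_on Z' (\<lambda>j. if j < n1 then (\<lambda>a. f a * h j a) else k (j - n1)) (n1 + n2)"
  unfolding indep_on_def
proof (rule allI, rule impI)
  fix d assume d: "\<forall>x\<in>Z'. (\<Sum>j<n1 + n2. d j * (if j < n1 then (\<lambda>a. f a * h j a) else k (j - n1)) x) = 0"
  have split: "(\<Sum>j<n1 + n2. d j * (if j < n1 then (\<lambda>a. f a * h j a) else k (j - n1)) x)
      = f x * (\<Sum>j<n1. d j * h j x) + (\<Sum>j<n2. d (n1 + j) * k j x)" for x
    unfolding sum_lessThan_add sum_distrib_left by (simp add: mult.assoc mult.left_commute)
  have d': "\<forall>x\<in>Z'. f x * (\<Sum>j<n1. d j * h j x) + (\<Sum>j<n2. d (n1 + j) * k j x) = 0"
    using d unfolding split .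
  have "\<forall>x\<in>Z. (\<Sum>j<n2. d (n1 + j) * k j x) = 0"
  proof
    fix x assume "x \<in> Z"
    with assms(1,2) have "x \<in> Z'" "f x = 0" by auto
    then show "(\<Sum>j<n2. d (n1 + j) * k j x) = 0" using bspec[OF d', of x] by simp
  qed
  then have d2: "\<forall>j<n2. d (n1 + j) = 0"
    using k[unfolded indep_on_def, rule_format, of "\<lambda>j. d (n1 + j)"] by blast
  then have "\<forall>x\<in>Z'. f x * (\<Sum>j<n1. d j * h j x) = 0" using d' by simp
  then have "\<forall>x\<in>Z'. (\<Sum>j<n1. d j * h j x) = 0" by (rule cancel)
  then have d1: "\<forall>j<n1. d j = 0" using h unfolding indep_on_def by blast
  show "\<forall>j<n1 + n2. d j = 0"
  proof (intro allI impI)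
    fix j assume "j < n1 + n2"
    then show "d j = 0" using d1 d2[rule_format, of "j - n1"] by (cases "j < n1") auto
  qed
qed

lemma indep_polys_on_extend:
  assumes Zc: "zar_closed r Z" and Z': "zar_irred r Z'" and sub: "Z \<subset> Z'"
  shows "\<exists>e. \<forall>t n1 n2. indep_polys_on Z' t n1 \<longrightarrow> indep_polys_on Z (t + e) n2
    \<longrightarrow> indep_polys_on Z' (t + e) (n1 + n2)"
proof -
  from Zc obtain S where S: "S \<subseteq> poly_fun" "Z = {a \<in> bform_space r. \<forall>p\<in>S. p a = 0}"
    unfolding zar_closed_def by blast
  from Z' have "Z' \<subseteq> bform_space r" unfolding zar_irred_def zar_closed_def by blast
  moreover from sub obtain x0 where x0: "x0 \<in> Z'" "x0 \<notin> Z" by blast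
  ultimately obtain f where f: "f \<in> S" "f x0 \<noteq> 0" using S(2) by blast
  then have fp: "f \<in> poly_fun" using S by blast
  from poly_fun_imp_gen_poly[OF fp] obtain e where fe: "gen_poly coord_funs e f" by blast
  show ?thesis
  proof (rule exI[of _ e], intro allI impI)
    fix t n1 n2 assume "indep_polys_on Z' t n1" "indep_polys_on Z (t + e) n2"
    then obtain h k where h: "\<forall>j<n1. gen_poly coord_funs t (h j)" "indep_on Z' h n1"
      and k: "\<forall>j<n2. gen_poly coord_funs (t + e) (k j)" "indep_on Z k n2"
      unfolding indep_polys_on_def by blast
    define H where "H = (\<lambda>j. if j < n1 then (\<lambda>a. f a * h j a) else k (j - n1))"
    have "indep_on Z' H (n1 + n2)"
      unfolding H_def
    proof (rule indep_on_append[OF _ _ h(2) k(2)])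
      show "Z \<subseteq> Z'" "\<forall>x\<in>Z. f x = 0" using sub S f by auto
      fix d assume fd: "\<forall>x\<in>Z'. f x * (\<Sum>j<n1. d j * h j x) = 0"
      have "gen_poly coord_funs t (\<lambda>x. \<Sum>j<n1. d j * h j x)"
        using h(1) by (intro gen_poly_sum gen_poly_scale) auto
      from zar_irred_mult_eq_0D[OF Z' fp gen_poly_coord_funs_imp_poly_fun[OF this] fd]
      show "\<forall>x\<in>Z'. (\<Sum>j<n1. d j * h j x) = 0" using x0 f by blast
    qed
    moreover have "gen_poly coord_funs (t + e) (H j)" if "j < n1 + n2" for j
    proof (cases "j < n1")
      case True
      then show ?thesis using gen_poly_mult[OF fe, of t "h j"] h(1) by (simp add: H_def add.commute)
    next
      case False
      then show ?thesis using that k(1) by (simp add: H_def)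
    qed
    ultimately show "indep_polys_on Z' (t + e) (n1 + n2)" unfolding indep_polys_on_def by blast
  qed
qed

lemma irred_chain_indep_polys_on:
  assumes irr: "\<forall>i\<le>k. zar_irred r (Z i)" and strict: "\<forall>i<k. Z i \<subset> Z (Suc i)"
  shows "i \<le> k \<Longrightarrow> \<exists>E. \<forall>q. indep_polys_on (Z i) (q * E) ((q + i) choose i)"
proof (induction i)
  case 0
  then show ?case using irr indep_polys_on_1 unfolding zar_irred_def by auto
next
  case (Suc i)
  then obtain E1 where E1: "\<forall>q. indep_polys_on (Z i) (q * E1) ((q + i) choose i)" by auto
  have "zar_closed r (Z i)" "zar_irred r (Z (Suc i))" "Z i \<subset> Z (Suc i)"
    using irr strict Suc.prems unfolding zar_irred_def by auto
  then obtain e where e: "\<And>t n1 n2. indep_polys_on (Z (Suc i)) t n1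
      \<Longrightarrow> indep_polys_on (Z i) (t + e) n2 \<Longrightarrow> indep_polys_on (Z (Suc i)) (t + e) (n1 + n2)"
    using indep_polys_on_extend by blast
  have ne: "Z (Suc i) \<noteq> {}" using irr Suc.prems unfolding zar_irred_def by auto
  define E where "E = max E1 e"
  have "indep_polys_on (Z (Suc i)) (q * E) ((q + Suc i) choose Suc i)" for q
  proof (induction q)
    case 0
    then show ?case using indep_polys_on_1[OF ne] by simp
  next
    case (Suc q)
    have "indep_polys_on (Z (Suc i)) (q * E + (E - e)) ((q + Suc i) choose Suc i)"
      using Suc.IH by (rule indep_polys_on_mono) simp
    moreover have "indep_polys_on (Z i) (Suc q * E) ((Suc q + i) choose i)"
      using E1 by (rule allE[of _ "Suc q"], elim indep_polys_on_mono)
        (auto simp: E_def intro!: add_mono mult_le_mono2)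
    then have "indep_polys_on (Z i) (q * E + (E - e) + e) ((Suc q + i) choose i)"
      by (simp add: E_def add.commute)
    ultimately have "indep_polys_on (Z (Suc i)) (q * E + (E - e) + e)
        (((q + Suc i) choose Suc i) + ((Suc q + i) choose i))"
      using e by blast
    then show ?case by (simp add: E_def add.commute)
  qed
  then show ?case by blast
qed

lemma binomial_exceeds_power:
  assumes "K < k"
  shows "\<exists>q. (q * A + 1) ^ K < (q + k) choose k"
proof -
  define B where "B = (A * k + 1) ^ K"
  define q where "q = k * B"
  have "real (q + k) / real k = real (B + 1)"
    unfolding q_def using assms by (simp add: field_simps)
  then have "real (B + 1) ^ k = (real (q + k) / real k) ^ k" by simp
  also have "\<dots> \<le> real ((q + k) choose k)" by (rule binomial_ge_n_over_k_pow_k) simp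
  finally have lo: "(B + 1) ^ k \<le> (q + k) choose k" by (simp only: of_nat_power[symmetric] of_nat_le_iff)
  have "(q * A + 1) ^ K \<le> ((A * k + 1) * (B + 1)) ^ K"
    unfolding q_def by (rule power_mono) (simp_all add: algebra_simps)
  also have "\<dots> = B * (B + 1) ^ K" unfolding power_mult_distrib B_def ..
  also have "\<dots> < (B + 1) * (B + 1) ^ K" by simp
  also have "\<dots> \<le> (B + 1) ^ k" using power_increasing[of "Suc K" k "B + 1"] assms by simp
  finally show ?thesis using lo by (intro exI[of _ q]) simp
qed

lemma irred_chain_le_of_indep_polys_bound:
  assumes bound: "\<And>Z t n. zar_irred r Z \<Longrightarrow> Z \<subseteq> X \<Longrightarrow> indep_polys_on Z t n \<Longrightarrow> n \<le> (t * A + 1) ^ K"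
    and ch: "irred_chain r X k"
  shows "k \<le> K"
proof (rule ccontr)
  assume "\<not> k \<le> K"
  from ch obtain Z where Z: "\<forall>i\<le>k. zar_irred r (Z i) \<and> Z i \<subseteq> X" "\<forall>i<k. Z i \<subset> Z (Suc i)"
    unfolding irred_chain_def by blast
  then obtain E where E: "\<forall>q. indep_polys_on (Z k) (q * E) ((q + k) choose k)"
    using irred_chain_indep_polys_on[of k r Z k] by auto
  obtain q where "(q * (E * A) + 1) ^ K < (q + k) choose k"
    using binomial_exceeds_power \<open>\<not> k \<le> K\<close> not_le by blast
  moreover have "(q + k) choose k \<le> (q * E * A + 1) ^ K"
    using bound Z(1) E by blast
  ultimately show False by (simp add: mult.assoc)
qed

section \<open>Coefficients of the transvectant\<close>

lemma ff_0 [simp]: "ff n 0 = 1"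
  unfolding ff_def by simp

lemma ff_Suc: "ff n (Suc k) = ff n k * (n - k)"
  unfolding ff_def by simp

lemma ff_Suc_Suc: "ff (Suc n) (Suc k) = Suc n * ff n k"
  unfolding ff_def by (simp add: prod.lessThan_Suc_shift del: prod.lessThan_Suc)

lemma ff_eq_0: "n < k \<Longrightarrow> ff n k = 0"
  unfolding ff_def by (rule prod_zero) auto

lemma ff_pos: "k \<le> n \<Longrightarrow> 0 < ff n k"
  unfolding ff_def by (intro prod_pos) auto

lemma ff_Suc_left: "ff (Suc n) a = ff n a + a * ff n (a - 1)"
proof (induction a)
  case 0
  then show ?case by simp
next
  case (Suc a)
  have "ff n (Suc a) + Suc a * ff n a = Suc n * ff n a"
  proof (cases "a \<le> n")
    case True
    have "ff n (Suc a) + Suc a * ff n a = ff n a * ((n - a) + Suc a)"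
      by (simp only: ff_Suc distrib_left mult.commute)
    also have "(n - a) + Suc a = Suc n" using True by simp
    finally show ?thesis by (simp only: mult.commute)
  next
    case False
    then show ?thesis by (simp add: ff_eq_0)
  qed
  then show ?case by (simp add: ff_Suc_Suc)
qed

(* d_X^(2m-j) d_Y^j (X^(r-i) Y^i) = tv_weight r m j i * X^(r-i-2m+j) Y^(i-j) *)
definition tv_weight :: "nat \<Rightarrow> nat \<Rightarrow> nat \<Rightarrow> nat \<Rightarrow> nat" where
  "tv_weight r m j i = ff (r - i) (2*m - j) * ff i j"

lemma tv_weight_neq_0D: "tv_weight r m j i \<noteq> 0 \<Longrightarrow> j \<le> i \<and> 2*m - j \<le> r - i"
  unfolding tv_weight_def using ff_eq_0[of i j] ff_eq_0[of "r - i" "2*m - j"]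
  by (cases "j \<le> i"; cases "2*m - j \<le> r - i") auto

lemma tv_weight_recurrence:
  assumes "i \<le> r"
  shows "i * tv_weight r m j (i - 1) = (i - j) * tv_weight r m j i + (2*m - j) * tv_weight r m (Suc j) i"
proof (cases i)
  case 0
  then show ?thesis by (simp add: tv_weight_def ff_eq_0)
next
  case (Suc i0)
  define n where "n = r - i"
  define a where "a = 2*m - j"
  have r: "r - i0 = Suc n" using assms Suc unfolding n_def by simp
  have W0: "tv_weight r m j (i - 1) = ff (Suc n) a * ff i0 j"
    unfolding tv_weight_def using Suc r a_def by simp
  have W1: "tv_weight r m j i = ff n a * ff i j" unfolding tv_weight_def n_def a_def ..
  have "2*m - Suc j = a - 1" unfolding a_def by simp
  then have W2: "tv_weight r m (Suc j) i = ff n (a - 1) * ff i (Suc j)"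
    unfolding tv_weight_def n_def by simp
  have "i * ff i0 j = ff i (Suc j)" using Suc ff_Suc_Suc by simp
  then have i: "i * ff i0 j = ff i j * (i - j)" by (simp only: ff_Suc)
  have "i * tv_weight r m j (i - 1) = (ff n a + a * ff n (a - 1)) * (i * ff i0 j)"
    unfolding W0 ff_Suc_left by (simp only: mult_ac)
  also have "\<dots> = (i - j) * tv_weight r m j i + a * tv_weight r m (Suc j) i"
    unfolding i W1 W2 ff_Suc by (simp only: distrib_left distrib_right mult_ac)
  finally show ?thesis unfolding a_def .
qed

lemma tv_weight_recurrence_int:
  assumes "i \<le> r" "j \<le> 2*m"
  shows "int i * int (tv_weight r m j (i - 1))
    = (int i - int j) * int (tv_weight r m j i) + (2 * int m - int j) * int (tv_weight r m (Suc j) i)"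
proof -
  have "int (i - j) * int (tv_weight r m j i) = (int i - int j) * int (tv_weight r m j i)"
    using tv_weight_neq_0D[of r m j i] by (cases "j \<le> i") auto
  then show ?thesis
    using arg_cong[OF tv_weight_recurrence[OF assms(1), of m j], of int] assms(2)
    by (simp add: of_nat_diff)
qed

definition tv_coeff :: "nat \<Rightarrow> nat \<Rightarrow> nat \<Rightarrow> nat \<Rightarrow> int" where
  "tv_coeff r m i l =
    (\<Sum>j\<le>2*m. (-1)^j * int (2*m choose j) * (int (tv_weight r m j i) * int (tv_weight r m (2*m - j) l)))"

lemma sum_atMost_split_first: "(\<Sum>j\<le>n. g j) = g 0 + (\<Sum>j<n. g (Suc j))"
  for g :: "nat \<Rightarrow> 'a::comm_monoid_add"
  by (induction n) (auto simp: add.assoc)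

lemma sum_atMost_split_last: "(\<Sum>j\<le>n. g j) = (\<Sum>j<n. g j) + g n"
  for g :: "nat \<Rightarrow> 'a::comm_monoid_add"
  by (simp add: lessThan_Suc_atMost[symmetric])

lemma choose_mult_diff: "(n choose j) * (n - j) = (n choose Suc j) * Suc j"
  using binomial_absorb_comp[of n j] times_binomial_minus1_eq[of "Suc j" n] by (simp add: mult.commute)

lemma alternating_binomial_telescope:
  fixes F G :: "nat \<Rightarrow> int"
  shows "(\<Sum>j\<le>n. (-1)^j * int (n choose j) * (int (n - j) * F (Suc j) * G (n - j)))
       + (\<Sum>j\<le>n. (-1)^j * int (n choose j) * (int j * F j * G (Suc (n - j)))) = 0"
proof -
  define X where "X j = (-1)^j * int (n choose j) * (int (n - j) * F (Suc j) * G (n - j))" for j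
  define Y where "Y j = (-1)^j * int (n choose j) * (int j * F j * G (Suc (n - j)))" for j
  have "X j + Y (Suc j) = 0" if "j < n" for j
  proof -
    have b: "int (n choose j) * int (n - j) = int (n choose Suc j) * int (Suc j)"
      using arg_cong[OF choose_mult_diff[of n j], of int] by (simp only: of_nat_mult)
    have s: "Suc (n - Suc j) = n - j" using that by simp
    define P where "P = F (Suc j) * G (n - j)"
    have "X j = (-1)^j * (int (n choose j) * int (n - j)) * P"
      unfolding X_def P_def by (simp only: mult_ac)
    also have "\<dots> = (-1)^j * (int (n choose Suc j) * int (Suc j)) * P" unfolding b ..
    finally have "X j = (-1)^j * (int (n choose Suc j) * int (Suc j)) * P" .
    moreover have "Y (Suc j) = - ((-1)^j * (int (n choose Suc j) * int (Suc j)) * P)"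
      unfolding Y_def P_def s by (simp add: algebra_simps)
    ultimately show ?thesis by simp
  qed
  then have "(\<Sum>j<n. X j) + (\<Sum>j<n. Y (Suc j)) = 0"
    by (simp add: sum.distrib[symmetric])
  moreover have "(\<Sum>j\<le>n. X j) = (\<Sum>j<n. X j)" unfolding sum_atMost_split_last X_def by simp
  moreover have "(\<Sum>j\<le>n. Y j) = (\<Sum>j<n. Y (Suc j))" unfolding sum_atMost_split_first Y_def by simp
  ultimately show ?thesis unfolding X_def Y_def by simp
qed

lemma tv_coeff_recurrence:
  assumes "i \<le> r" "l \<le> r"
  shows "int i * tv_coeff r m (i - 1) l + int l * tv_coeff r m i (l - 1)
    = (int i + int l - 2 * int m) * tv_coeff r m i l"
proof -
  define A where "A j x = int (tv_weight r m j x)" for j x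
  define C where "C j = (-1)^j * int (2*m choose j)" for j :: nat
  have tv_coeff_eq: "tv_coeff r m x y = (\<Sum>j\<le>2*m. C j * (A j x * A (2*m - j) y))" for x y
    unfolding tv_coeff_def A_def C_def by simp
  define X where "X j = C j * (int (2*m - j) * A (Suc j) i * A (2*m - j) l)" for j
  define Y where "Y j = C j * (int j * A j i * A (Suc (2*m - j)) l)" for j
  have XY: "(\<Sum>j\<le>2*m. X j) + (\<Sum>j\<le>2*m. Y j) = 0"
    using alternating_binomial_telescope[of "2*m" "\<lambda>j. A j i" "\<lambda>j. A j l"]
    unfolding X_def Y_def C_def by (simp add: mult.assoc)
  have step: "C j * ((int i * A j (i - 1)) * A (2*m - j) l + A j i * (int l * A (2*m - j) (l - 1)))
      = (int i + int l - 2 * int m) * (C j * (A j i * A (2*m - j) l)) + X j + Y j"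
    if j: "j \<le> 2*m" for j
  proof -
    have t1: "int i * A j (i - 1) = (int i - int j) * A j i + (2 * int m - int j) * A (Suc j) i"
      unfolding A_def using tv_weight_recurrence_int[OF assms(1) j] .
    have t2: "int l * A (2*m - j) (l - 1)
        = (int l - int (2*m - j)) * A (2*m - j) l + int j * A (Suc (2*m - j)) l"
      unfolding A_def using tv_weight_recurrence_int[OF assms(2), of "2*m - j" m] j
      by (simp add: of_nat_diff)
    have "int (2*m - j) = 2 * int m - int j" using j by simp
    then show ?thesis unfolding t1 t2 X_def Y_def by (simp add: algebra_simps)
  qed
  have "int i * tv_coeff r m (i - 1) l + int l * tv_coeff r m i (l - 1)
      = (\<Sum>j\<le>2*m. C j * ((int i * A j (i - 1)) * A (2*m - j) l + A j i * (int l * A (2*m - j) (l - 1))))"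
    unfolding tv_coeff_eq sum_distrib_left sum.distrib[symmetric]
    by (rule sum.cong[OF refl]) (simp only: ring_distribs mult_ac)
  also have "\<dots> = (\<Sum>j\<le>2*m. (int i + int l - 2 * int m) * (C j * (A j i * A (2*m - j) l)) + X j + Y j)"
    by (rule sum.cong[OF refl]) (rule step, simp)
  also have "\<dots> = (int i + int l - 2 * int m) * tv_coeff r m i l"
    using XY unfolding tv_coeff_eq by (simp add: sum.distrib sum_distrib_left)
  finally show ?thesis .
qed

lemma transv_eq_tv_coeff:
  "transv r m a k = (\<Sum>i\<le>r. \<Sum>l\<le>r. if i + l = k + 2*m then of_int (tv_coeff r m i l) * a i * a l else 0)"
proof -
  have coeff: "of_int (tv_coeff r m i l) = (\<Sum>j\<le>2*m. (-1)^j * of_nat (2*m choose j)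
      * of_nat (ff (r-i) (2*m-j) * ff i j * ff (r-l) j * ff l (2*m-j)) :: complex)" for i l
    unfolding tv_coeff_def of_int_sum
  proof (intro sum.cong refl)
    fix j assume "j \<in> {..2*m}"
    then have "2*m - (2*m - j) = j" by simp
    then show "of_int ((-1)^j * int (2*m choose j) * (int (tv_weight r m j i) * int (tv_weight r m (2*m - j) l)))
      = ((-1)^j * of_nat (2*m choose j) * of_nat (ff (r-i) (2*m-j) * ff i j * ff (r-l) j * ff l (2*m-j)) :: complex)"
      unfolding tv_weight_def by (simp add: mult_ac)
  qed
  have "transv r m a k = (\<Sum>i\<le>r. \<Sum>l\<le>r. \<Sum>j\<le>2*m. if i + l = k + 2*m then
          (-1)^j * of_nat (2*m choose j)
          * of_nat (ff (r-i) (2*m-j) * ff i j * ff (r-l) j * ff l (2*m-j)) * a i * a l else 0)"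
    unfolding transv_def by (subst sum.swap) (subst (2) sum.swap, rule refl)
  also have "\<dots> = (\<Sum>i\<le>r. \<Sum>l\<le>r. if i + l = k + 2*m then of_int (tv_coeff r m i l) * a i * a l else 0)"
  proof (intro sum.cong refl)
    fix i l
    show "(\<Sum>j\<le>2*m. if i + l = k + 2*m then (-1)^j * of_nat (2*m choose j)
          * of_nat (ff (r-i) (2*m-j) * ff i j * ff (r-l) j * ff l (2*m-j)) * a i * a l else 0)
        = (if i + l = k + 2*m then of_int (tv_coeff r m i l) * a i * a l else 0)"
      unfolding coeff by (cases "i + l = k + 2*m") (simp_all add: sum_distrib_right)
  qed
  finally show ?thesis .
qed

lemma tv_coeff_eq_0_high:
  assumes "i \<le> r" "l \<le> r" "2*r - 2*m < i + l"
  shows "tv_coeff r m i l = 0"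
  unfolding tv_coeff_def
proof (rule sum.neutral, rule ballI)
  fix j assume "j \<in> {..2*m}"
  then have j: "j \<le> 2*m" by simp
  have "tv_weight r m j i = 0 \<or> tv_weight r m (2*m - j) l = 0"
  proof (rule ccontr)
    assume "\<not> ?thesis"
    then have "2*m - j \<le> r - i" "2*m - (2*m - j) \<le> r - l" using tv_weight_neq_0D by blast+
    then show False using assms j by linarith
  qed
  then show "(-1)^j * int (2*m choose j) * (int (tv_weight r m j i) * int (tv_weight r m (2*m - j) l)) = 0"
    by auto
qed

lemma transv_eq_0_high: "2*r - 4*m < k \<Longrightarrow> transv r m b k = 0"
  unfolding transv_eq_tv_coeff using tv_coeff_eq_0_high[of _ r _ m] by (intro sum.neutral ballI) auto

lemma transv_eq_convolution:
  assumes "l \<le> r" "2*m \<le> l"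
  shows "transv r m b (l - 2*m) = (\<Sum>i\<le>l. of_int (tv_coeff r m i (l - i)) * b i * b (l - i))"
proof -
  have "transv r m b (l - 2*m)
      = (\<Sum>i\<le>r. if i \<le> l then of_int (tv_coeff r m i (l - i)) * b i * b (l - i) else 0)"
    unfolding transv_eq_tv_coeff
  proof (intro sum.cong refl)
    fix i
    show "(\<Sum>l'\<le>r. if i + l' = l - 2*m + 2*m then of_int (tv_coeff r m i l') * b i * b l' else 0)
        = (if i \<le> l then of_int (tv_coeff r m i (l - i)) * b i * b (l - i) else 0)"
    proof (cases "i \<le> l")
      case True
      have "(\<Sum>l'\<le>r. if i + l' = l - 2*m + 2*m then of_int (tv_coeff r m i l') * b i * b l' else 0)
          = (\<Sum>l'\<le>r. if l' = l - i then of_int (tv_coeff r m i l') * b i * b l' else 0)"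
        using True assms by (intro sum.cong refl) auto
      also have "\<dots> = of_int (tv_coeff r m i (l - i)) * b i * b (l - i)"
        using assms True by (subst sum.delta) auto
      finally show ?thesis using True by simp
    next
      case False
      then show ?thesis using assms by (auto intro!: sum.neutral)
    qed
  qed
  also have "\<dots> = (\<Sum>i\<in>{..r} \<inter> {..l}. of_int (tv_coeff r m i (l - i)) * b i * b (l - i))"
    by (subst sum.inter_restrict) (auto simp: atMost_iff)
  also have "{..r} \<inter> {..l} = {..l}" using assms by auto
  finally show ?thesis .
qed

lemma tv_coeff_0_left:
  assumes "2*m \<le> l"
  shows "tv_coeff r m 0 l = int (ff r (2*m) * ff l (2*m))"
proof -
  have "(\<Sum>j<2*m. (-1)^(Suc j) * int (2*m choose Suc j)
      * (int (tv_weight r m (Suc j) 0) * int (tv_weight r m (2*m - Suc j) l))) = 0"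
    by (intro sum.neutral) (auto simp: tv_weight_def ff_eq_0)
  then show ?thesis unfolding tv_coeff_def sum_atMost_split_first by (simp add: tv_weight_def)
qed

lemma tv_coeff_0_right:
  assumes "2*m \<le> l"
  shows "tv_coeff r m l 0 = int (ff r (2*m) * ff l (2*m))"
proof -
  have "(\<Sum>j<2*m. (-1)^j * int (2*m choose j)
      * (int (tv_weight r m j l) * int (tv_weight r m (2*m - j) 0))) = 0"
    by (intro sum.neutral) (auto simp: tv_weight_def ff_eq_0)
  then show ?thesis unfolding tv_coeff_def sum_atMost_split_last by (simp add: tv_weight_def)
qed

section \<open>Invariance of the cone under shears\<close>

lemma sum_atMost_shift_Suc:
  fixes g :: "nat \<Rightarrow> 'a::comm_monoid_add"
  assumes "g 0 = 0" "g (Suc r) = 0"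
  shows "(\<Sum>i\<le>r. g (Suc i)) = (\<Sum>i\<le>r. g i)"
  using sum.atMost_Suc_shift[of g r] sum.atMost_Suc[of g r] assms by simp

definition transv_polar :: "nat \<Rightarrow> nat \<Rightarrow> (nat \<Rightarrow> complex) \<Rightarrow> (nat \<Rightarrow> complex) \<Rightarrow> nat \<Rightarrow> complex" where
  "transv_polar r m b b' k = (\<Sum>i\<le>r. \<Sum>l\<le>r.
     if i + l = k + 2*m then of_int (tv_coeff r m i l) * (b' i * b l + b i * b' l) else 0)"

lemma transv_has_field_derivative:
  assumes "\<And>i. ((\<lambda>s. b i s) has_field_derivative b' i) (at s)"
  shows "((\<lambda>s. transv r m (\<lambda>i. b i s) k) has_field_derivative transv_polar r m (\<lambda>i. b i s) b' k) (at s)"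
  unfolding transv_eq_tv_coeff transv_polar_def
proof (intro DERIV_sum)
  fix i l
  have "((\<lambda>s. b i s * b l s) has_field_derivative b' i * b l s + b i s * b' l) (at s)"
    using DERIV_mult[OF assms assms] by (simp add: mult.commute)
  from DERIV_cmult[OF this, of "of_int (tv_coeff r m i l)"]
  show "((\<lambda>s. if i + l = k + 2*m then of_int (tv_coeff r m i l) * b i s * b l s else 0) has_field_derivative
      (if i + l = k + 2*m then of_int (tv_coeff r m i l) * (b' i * b l s + b i s * b' l) else 0)) (at s)"
    by (cases "i + l = k + 2*m") (simp_all add: mult.assoc)
qed

lemma tv_coeff_recurrence_of_int:
  assumes "i \<le> r" "l \<le> r" "i + l = Suc k + 2*m"
  shows "of_int (int i * tv_coeff r m (i - 1) l) * x + of_int (int l * tv_coeff r m i (l - 1)) * x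
    = of_nat (Suc k) * (of_int (tv_coeff r m i l) * x :: complex)"
proof -
  have e: "int i * tv_coeff r m (i - 1) l + int l * tv_coeff r m i (l - 1) = int (Suc k) * tv_coeff r m i l"
    using tv_coeff_recurrence[OF assms(1,2), of m] assms(3) by simp
  have "of_int (int i * tv_coeff r m (i - 1) l) * x + of_int (int l * tv_coeff r m i (l - 1)) * x
      = of_int (int i * tv_coeff r m (i - 1) l + int l * tv_coeff r m i (l - 1)) * x"
    by (simp only: of_int_add distrib_right)
  also have "\<dots> = of_nat (Suc k) * (of_int (tv_coeff r m i l) * x)" unfolding e by simp
  finally show ?thesis .
qed

(* The raising operator a_i \<mapsto> (i+1) a_(i+1) of sl_2 acts on the transvectant as k \<mapsto> k+1. *)
lemma transv_polar_raise:
  assumes b: "b \<in> bform_space r"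
  shows "transv_polar r m b (\<lambda>i. of_nat (Suc i) * b (Suc i)) k = of_nat (Suc k) * transv r m b (Suc k)"
proof -
  define K where "K = Suc k + 2*m"
  have bS: "b (Suc r) = 0" using b unfolding bform_space_def by simp
  define g where "g i l = (if i + l = K then of_int (int i * tv_coeff r m (i - 1) l) * b i * b l else 0)" for i l
  define h where "h i l = (if i + l = K then of_int (int l * tv_coeff r m i (l - 1)) * b i * b l else 0)" for i l
  have S1: "(\<Sum>i\<le>r. \<Sum>l\<le>r. if i + l = k + 2*m
        then of_int (tv_coeff r m i l) * (of_nat (Suc i) * b (Suc i) * b l) else 0)
      = (\<Sum>i\<le>r. \<Sum>l\<le>r. g i l)"
  proof -
    have "(\<Sum>i\<le>r. \<Sum>l\<le>r. if i + l = k + 2*m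
          then of_int (tv_coeff r m i l) * (of_nat (Suc i) * b (Suc i) * b l) else 0)
        = (\<Sum>i\<le>r. (\<lambda>i. \<Sum>l\<le>r. g i l) (Suc i))"
      unfolding g_def K_def by (intro sum.cong refl) (auto simp: mult_ac)
    also have "\<dots> = (\<Sum>i\<le>r. \<Sum>l\<le>r. g i l)"
      by (rule sum_atMost_shift_Suc) (auto simp: g_def bS intro!: sum.neutral)
    finally show ?thesis .
  qed
  have S2: "(\<Sum>i\<le>r. \<Sum>l\<le>r. if i + l = k + 2*m
        then of_int (tv_coeff r m i l) * (b i * (of_nat (Suc l) * b (Suc l))) else 0)
      = (\<Sum>i\<le>r. \<Sum>l\<le>r. h i l)"
  proof (rule sum.cong[OF refl])
    fix i
    have "(\<Sum>l\<le>r. if i + l = k + 2*m then of_int (tv_coeff r m i l) * (b i * (of_nat (Suc l) * b (Suc l))) else 0)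
        = (\<Sum>l\<le>r. h i (Suc l))"
      unfolding h_def K_def by (intro sum.cong refl) (auto simp: mult_ac)
    also have "\<dots> = (\<Sum>l\<le>r. h i l)"
      by (rule sum_atMost_shift_Suc) (auto simp: h_def bS)
    finally show "(\<Sum>l\<le>r. if i + l = k + 2*m
        then of_int (tv_coeff r m i l) * (b i * (of_nat (Suc l) * b (Suc l))) else 0) = (\<Sum>l\<le>r. h i l)" .
  qed
  have gh: "g i l + h i l = of_nat (Suc k) * (if i + l = Suc k + 2*m then of_int (tv_coeff r m i l) * b i * b l else 0)"
    if "i \<le> r" "l \<le> r" for i l
    using tv_coeff_recurrence_of_int[OF that, where m=m and k=k and x="b i * b l"]
    unfolding g_def h_def K_def by (simp add: mult.assoc)
  have "transv_polar r m b (\<lambda>i. of_nat (Suc i) * b (Suc i)) k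
      = (\<Sum>i\<le>r. \<Sum>l\<le>r. if i + l = k + 2*m
          then of_int (tv_coeff r m i l) * (of_nat (Suc i) * b (Suc i) * b l) else 0)
      + (\<Sum>i\<le>r. \<Sum>l\<le>r. if i + l = k + 2*m
          then of_int (tv_coeff r m i l) * (b i * (of_nat (Suc l) * b (Suc l))) else 0)"
    unfolding transv_polar_def sum.distrib[symmetric] by (intro sum.cong refl) (simp add: distrib_left)
  also have "\<dots> = (\<Sum>i\<le>r. \<Sum>l\<le>r. g i l + h i l)"
    unfolding S1 S2 sum.distrib ..
  also have "\<dots> = of_nat (Suc k) * transv r m b (Suc k)"
    unfolding transv_eq_tv_coeff sum_distrib_left by (intro sum.cong refl) (simp add: gh)
  finally show ?thesis .
qed

(* the coefficients of the form x(X, Y + sX) *)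
definition shear :: "nat \<Rightarrow> complex \<Rightarrow> (nat \<Rightarrow> complex) \<Rightarrow> nat \<Rightarrow> complex" where
  "shear r s a u = (\<Sum>i\<le>r. of_nat (i choose u) * s ^ (i - u) * a i)"

lemma shear_in_bform_space: "shear r s a \<in> bform_space r"
  unfolding bform_space_def shear_def by (auto intro!: sum.neutral simp: binomial_eq_0_iff)

lemma shear_0: "a \<in> bform_space r \<Longrightarrow> shear r 0 a = a"
proof
  fix u assume a: "a \<in> bform_space r"
  show "shear r 0 a u = a u"
  proof (cases "u \<le> r")
    case True
    have "shear r 0 a u = (\<Sum>i\<in>{u}. of_nat (i choose u) * 0 ^ (i - u) * a i)"
      unfolding shear_def by (rule sum.mono_neutral_right) (use True in auto)
    then show ?thesis by simp
  next
    case False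
    then show ?thesis using a unfolding shear_def bform_space_def by (auto intro!: sum.neutral)
  qed
qed

lemma shear_split:
  assumes "u \<le> r"
  shows "shear r s a u = a u + (\<Sum>i\<in>{Suc u..r}. of_nat (i choose u) * s ^ (i - u) * a i)"
proof -
  have "shear r s a u = (\<Sum>i\<in>{u..r}. of_nat (i choose u) * s ^ (i - u) * a i)"
    unfolding shear_def by (rule sum.mono_neutral_right) auto
  also have "{u..r} = insert u {Suc u..r}" using assms by auto
  finally show ?thesis by simp
qed

lemma shear_has_field_derivative:
  "((\<lambda>s. shear r s a u) has_field_derivative (of_nat (Suc u) * shear r s a (Suc u))) (at s)"
proof -
  have d: "((\<lambda>s. shear r s a u) has_field_derivative
      (\<Sum>i\<le>r. of_nat (i choose u) * (of_nat (i - u) * s ^ (i - u - 1)) * a i)) (at s)"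
    unfolding shear_def
  proof (rule DERIV_sum)
    fix n
    have "((\<lambda>s. s ^ (n - u)) has_field_derivative of_nat (n - u) * s ^ (n - u - 1)) (at s)"
      using DERIV_power[where n="n - u", OF DERIV_ident[of "at s"]] by simp
    from DERIV_cmult_right[OF DERIV_cmult[OF this, of "of_nat (n choose u)"], of "a n"]
    show "((\<lambda>s. of_nat (n choose u) * s ^ (n - u) * a n) has_field_derivative
        of_nat (n choose u) * (of_nat (n - u) * s ^ (n - u - 1)) * a n) (at s)" .
  qed
  have "(\<Sum>i\<le>r. of_nat (i choose u) * (of_nat (i - u) * s ^ (i - u - 1)) * a i)
      = of_nat (Suc u) * shear r s a (Suc u)"
    unfolding shear_def sum_distrib_left
  proof (intro sum.cong refl)
    fix i
    have "of_nat (i choose u) * of_nat (i - u) = (of_nat (i choose Suc u) * of_nat (Suc u) :: complex)"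
      using arg_cong[OF choose_mult_diff[of i u], of "of_nat :: nat \<Rightarrow> complex"] by (simp only: of_nat_mult)
    moreover have "i - u - 1 = i - Suc u" by simp
    ultimately show "of_nat (i choose u) * (of_nat (i - u) * s ^ (i - u - 1)) * a i
        = of_nat (Suc u) * (of_nat (i choose Suc u) * s ^ (i - Suc u) * a i)"
      by (simp add: mult_ac)
  qed
  with d show ?thesis by simp
qed

lemma derivative_chain_eq_0:
  fixes G :: "nat \<Rightarrow> complex \<Rightarrow> complex"
  assumes deriv: "\<And>k s. ((\<lambda>s. G k s) has_field_derivative c k * G (Suc k) s) (at s)"
    and high: "\<And>k s. N < k \<Longrightarrow> G k s = 0"
    and at_0: "\<And>k. G k 0 = 0"
  shows "G k s = 0"
proof -
  have "\<forall>k s. N < k + d \<longrightarrow> G k s = 0" for d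
  proof (induction d)
    case 0
    then show ?case using high by simp
  next
    case (Suc d)
    show ?case
    proof (intro allI impI)
      fix k s assume "N < k + Suc d"
      then have "\<forall>s. G (Suc k) s = 0" using Suc.IH by simp
      then have "((\<lambda>s. G k s) has_field_derivative 0) (at x)" for x using deriv[of k x] by simp
      then obtain C where C: "\<forall>x\<in>UNIV. G k x = C"
        using has_field_derivative_zero_constant[of UNIV "G k"] by auto
      have "G k s = G k 0" using C by simp
      then show "G k s = 0" using at_0[of k] by simp
    qed
  qed
  from this[of "Suc N"] show ?thesis by simp
qed

lemma shear_in_Mcone:
  assumes a: "a \<in> Mcone r m"
  shows "shear r s a \<in> Mcone r m"
proof -
  have ab: "a \<in> bform_space r" using a unfolding Mcone_def by auto
  define G where "G k s = (if k \<le> 2*r - 4*m then transv r m (shear r s a) k else 0)" for k s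
  have "G k s = 0" for k
  proof (rule derivative_chain_eq_0[where G=G and c="\<lambda>k. of_nat (Suc k)" and N="2*r - 4*m"])
    fix k s
    have "((\<lambda>s. transv r m (\<lambda>i. shear r s a i) k) has_field_derivative
        transv_polar r m (\<lambda>i. shear r s a i) (\<lambda>i. of_nat (Suc i) * shear r s a (Suc i)) k) (at s)"
      by (rule transv_has_field_derivative) (rule shear_has_field_derivative)
    then have deriv: "((\<lambda>s. transv r m (shear r s a) k) has_field_derivative
        of_nat (Suc k) * transv r m (shear r s a) (Suc k)) (at s)"
      using transv_polar_raise[OF shear_in_bform_space[of r s a]] by simp
    show "((\<lambda>s. G k s) has_field_derivative of_nat (Suc k) * G (Suc k) s) (at s)"
    proof (cases "k \<le> 2*r - 4*m")
      case True
      have "G (Suc k) s = transv r m (shear r s a) (Suc k)"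
        using transv_eq_0_high[of r m "Suc k"] by (simp add: G_def)
      with True show ?thesis using deriv unfolding G_def by simp
    next
      case False
      then show ?thesis unfolding G_def by simp
    qed
  next
    show "G k 0 = 0" for k using a unfolding G_def shear_0[OF ab] Mcone_def by auto
  qed (simp add: G_def)
  then have "transv r m (shear r s a) k = 0" if "k \<le> 2*r - 4*m" for k
    using that by (metis G_def)
  then show ?thesis unfolding Mcone_def using shear_in_bform_space by blast
qed

lemma ex_shear_0_neq_0:
  assumes a: "a \<in> bform_space r" "a \<noteq> (\<lambda>_. 0)"
  shows "\<exists>s. shear r s a 0 \<noteq> 0"
proof -
  define p where "p = (\<Sum>i\<le>r. monom (a i) i)"
  have p: "poly p s = shear r s a 0" for s
    unfolding p_def shear_def by (simp add: poly_sum poly_monom mult_ac)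
  obtain i where i: "a i \<noteq> 0" using a(2) by auto
  then have "i \<le> r" using a(1) unfolding bform_space_def by (cases "i \<le> r") auto
  then have "coeff p i = a i" unfolding p_def coeff_sum by (simp add: coeff_monom sum.delta)
  then have "p \<noteq> 0" using i by auto
  then have "finite {x. poly p x = 0}" by (rule poly_roots_finite)
  then obtain s where "s \<notin> {x. poly p x = 0}"
    using ex_new_if_finite[OF infinite_UNIV_char_0] by blast
  then show ?thesis using p by auto
qed

section \<open>Polynomial functions on the cone in few coordinates\<close>

definition shear_coords :: "nat \<Rightarrow> nat \<Rightarrow> complex \<Rightarrow> ((nat \<Rightarrow> complex) \<Rightarrow> complex) set" where
  "shear_coords r m s = (\<lambda>u a. shear r s a u) ` {..<2*m}"

definition Mcone_poly :: "nat \<Rightarrow> nat \<Rightarrow> complex \<Rightarrow> nat \<Rightarrow> ((nat \<Rightarrow> complex) \<Rightarrow> complex) \<Rightarrow> bool" where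
  "Mcone_poly r m s D f \<longleftrightarrow> (\<exists>g. gen_poly (shear_coords r m s) D g \<and> (\<forall>a\<in>Mcone r m. f a = g a))"

lemma Mcone_poly_of_gen_poly: "gen_poly (shear_coords r m s) D g \<Longrightarrow> Mcone_poly r m s D g"
  unfolding Mcone_poly_def by blast

lemma Mcone_poly_cong: "Mcone_poly r m s D f \<Longrightarrow> (\<forall>a\<in>Mcone r m. f a = f' a) \<Longrightarrow> Mcone_poly r m s D f'"
  unfolding Mcone_poly_def by auto

lemma Mcone_poly_const: "Mcone_poly r m s D (\<lambda>_. c)"
  by (rule Mcone_poly_of_gen_poly, rule gen_poly.const)

lemma Mcone_poly_add:
  assumes "Mcone_poly r m s D f" "Mcone_poly r m s D g"
  shows "Mcone_poly r m s D (\<lambda>a. f a + g a)"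
proof -
  from assms obtain f' g' where "gen_poly (shear_coords r m s) D f'" "\<forall>a\<in>Mcone r m. f a = f' a"
    "gen_poly (shear_coords r m s) D g'" "\<forall>a\<in>Mcone r m. g a = g' a"
    unfolding Mcone_poly_def by blast
  then show ?thesis unfolding Mcone_poly_def using gen_poly.add by fastforce
qed

lemma Mcone_poly_scale:
  assumes "Mcone_poly r m s D f"
  shows "Mcone_poly r m s D (\<lambda>a. c * f a)"
proof -
  from assms obtain f' where "gen_poly (shear_coords r m s) D f'" "\<forall>a\<in>Mcone r m. f a = f' a"
    unfolding Mcone_poly_def by blast
  then show ?thesis unfolding Mcone_poly_def using gen_poly_scale by fastforce
qed

lemma Mcone_poly_mult:
  assumes "Mcone_poly r m s D1 f" "Mcone_poly r m s D2 g"
  shows "Mcone_poly r m s (D1 + D2) (\<lambda>a. f a * g a)"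
proof -
  from assms obtain f' g' where "gen_poly (shear_coords r m s) D1 f'" "\<forall>a\<in>Mcone r m. f a = f' a"
    "gen_poly (shear_coords r m s) D2 g'" "\<forall>a\<in>Mcone r m. g a = g' a"
    unfolding Mcone_poly_def by blast
  then show ?thesis unfolding Mcone_poly_def using gen_poly_mult by fastforce
qed

lemma Mcone_poly_mono: "Mcone_poly r m s D f \<Longrightarrow> D \<le> D' \<Longrightarrow> Mcone_poly r m s D' f"
  unfolding Mcone_poly_def by (auto intro: gen_poly_mono)

lemma Mcone_poly_sum:
  "finite A \<Longrightarrow> (\<And>x. x \<in> A \<Longrightarrow> Mcone_poly r m s D (F x)) \<Longrightarrow> Mcone_poly r m s D (\<lambda>a. \<Sum>x\<in>A. F x a)"
proof (induction A rule: finite_induct)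
  case empty
  then show ?case using Mcone_poly_const[of r m s D 0] by simp
next
  case (insert x A)
  then show ?case using Mcone_poly_add[of r m s D "F x" "\<lambda>a. \<Sum>x\<in>A. F x a"] by simp
qed

lemma Mcone_poly_shear_coord: "u < 2*m \<Longrightarrow> Mcone_poly r m s 1 (\<lambda>a. shear r s a u)"
  by (rule Mcone_poly_of_gen_poly, rule gen_poly_generator) (auto simp: shear_coords_def)

lemma Mcone_poly_shear_0_power: "0 < m \<Longrightarrow> Mcone_poly r m s n (\<lambda>a. shear r s a 0 ^ n)"
  using gen_poly_power[OF gen_poly_generator[of "\<lambda>a. shear r s a 0" "shear_coords r m s"], of n]
  by (intro Mcone_poly_of_gen_poly) (auto simp: shear_coords_def)

lemma Mcone_shear_recurrence:
  assumes a: "a \<in> Mcone r m" and m: "0 < m" and l: "2*m \<le> l" "l \<le> r"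
  shows "(\<Sum>i<l - 1. of_int (tv_coeff r m (Suc i) (l - Suc i)) * shear r s a (Suc i) * shear r s a (l - Suc i))
    = - (2 * of_nat (ff r (2*m) * ff l (2*m)) * shear r s a 0 * shear r s a l)"
proof -
  define b where "b = shear r s a"
  define T where "T i = of_int (tv_coeff r m i (l - i)) * b i * b (l - i)" for i
  have "transv r m b (l - 2*m) = 0"
    using shear_in_Mcone[OF a] l unfolding b_def Mcone_def by auto
  then have "(\<Sum>i\<le>l. T i) = 0" unfolding T_def using transv_eq_convolution[OF l(2,1)] by simp
  moreover have "l = Suc (Suc (l - 2))" using l m by linarith
  then have "(\<Sum>i\<le>l. T i) = T 0 + (\<Sum>i<l - 1. T (Suc i)) + T l"
    unfolding sum_atMost_split_first by (metis diff_Suc_1 sum.lessThan_Suc add.assoc)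
  moreover have "T 0 = of_nat (ff r (2*m) * ff l (2*m)) * b 0 * b l"
    "T l = of_nat (ff r (2*m) * ff l (2*m)) * b 0 * b l"
    unfolding T_def using tv_coeff_0_left[OF l(1)] tv_coeff_0_right[OF l(1)] by (simp_all add: mult_ac)
  ultimately have "(\<Sum>i<l - 1. T (Suc i)) = - (2 * of_nat (ff r (2*m) * ff l (2*m)) * b 0 * b l)"
    by algebra
  then show ?thesis unfolding T_def b_def by simp
qed

(* The power of a_0 that clears the denominators when a_l is solved for recursively,
   because (2^i - 1) + (2^(l-i) - 1) \<le> 2^l - 2 for 0 < i < l. *)
definition denom_exp :: "nat \<Rightarrow> nat" where
  "denom_exp l = 2^l - 1"

lemma denom_exp_mono: "u \<le> r \<Longrightarrow> denom_exp u \<le> denom_exp r"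
  unfolding denom_exp_def by (simp add: diff_le_mono)

lemma denom_exp_split:
  assumes "i < l - 1"
  shows "denom_exp (Suc i) + denom_exp (l - Suc i) \<le> denom_exp l - 1"
proof -
  have add_le_mult: "x + y \<le> x * y" if "2 \<le> x" "2 \<le> y" for x y :: nat
  proof -
    have "(a + 2) + (b + 2) \<le> (a + 2) * (b + 2)" for a b :: nat by (simp add: algebra_simps)
    moreover have "x - 2 + 2 = x" "y - 2 + 2 = y" using that by simp_all
    ultimately show ?thesis by metis
  qed
  have "(2::nat) \<le> 2^(Suc i)" using power_increasing[of 1 "Suc i" "2::nat"] by simp
  moreover have "(2::nat) \<le> 2^(l - Suc i)" using power_increasing[of 1 "l - Suc i" "2::nat"] assms by simp
  ultimately have "(2::nat)^(Suc i) + 2^(l - Suc i) \<le> 2^(Suc i) * 2^(l - Suc i)" by (rule add_le_mult)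
  also have "\<dots> = 2^l" using assms unfolding power_add[symmetric] by simp
  finally show ?thesis unfolding denom_exp_def by simp
qed

lemma Mcone_shear_solve:
  assumes a: "a \<in> Mcone r m" and m: "0 < m" and l: "2*m \<le> l" "l \<le> r"
  shows "shear r s a 0 ^ denom_exp l * shear r s a l
    = (\<Sum>i<l - 1. - of_int (tv_coeff r m (Suc i) (l - Suc i)) / (2 * of_nat (ff r (2*m) * ff l (2*m)))
        * (shear r s a 0 ^ (denom_exp l - 1) * shear r s a (Suc i) * shear r s a (l - Suc i)))"
proof -
  let ?b = "shear r s a"
  let ?c = "2 * of_nat (ff r (2*m) * ff l (2*m)) :: complex"
  have "?c \<noteq> 0" using ff_pos[of "2*m" r] ff_pos[of "2*m" l] l by simp
  have "(2::nat)^2 \<le> 2^l" using l m by (intro power_increasing) auto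
  then have E: "Suc (denom_exp l - 1) = denom_exp l" unfolding denom_exp_def by simp
  have "(\<Sum>i<l - 1. - of_int (tv_coeff r m (Suc i) (l - Suc i)) / ?c
        * (?b 0 ^ (denom_exp l - 1) * ?b (Suc i) * ?b (l - Suc i)))
      = - (?b 0 ^ (denom_exp l - 1)) / ?c
        * (\<Sum>i<l - 1. of_int (tv_coeff r m (Suc i) (l - Suc i)) * ?b (Suc i) * ?b (l - Suc i))"
    unfolding sum_distrib_left using \<open>?c \<noteq> 0\<close> by (intro sum.cong refl) (simp add: field_simps)
  also have "\<dots> = ?b 0 ^ Suc (denom_exp l - 1) * ?b l"
    using Mcone_shear_recurrence[OF a m l, of s] \<open>?c \<noteq> 0\<close> by simp
  also have "\<dots> = ?b 0 ^ denom_exp l * ?b l" unfolding E ..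
  finally show ?thesis by (rule sym)
qed

lemma Mcone_poly_shear:
  assumes m: "0 < m" "2*m \<le> r"
  shows "l \<le> r \<Longrightarrow> Mcone_poly r m s (denom_exp l + 1) (\<lambda>a. shear r s a 0 ^ denom_exp l * shear r s a l)"
proof (induction l rule: less_induct)
  case (less l)
  show ?case
  proof (cases "l < 2*m")
    case True
    from Mcone_poly_mult[OF Mcone_poly_shear_0_power[OF m(1)] Mcone_poly_shear_coord[OF True]]
    show ?thesis by simp
  next
    case False
    then have l: "2*m \<le> l" by simp
    have "Mcone_poly r m s (denom_exp l + 1)
        (\<lambda>a. shear r s a 0 ^ (denom_exp l - 1) * shear r s a (Suc i) * shear r s a (l - Suc i))"
      if i: "i < l - 1" for i
    proof -
      define ex where "ex = denom_exp l - 1 - (denom_exp (Suc i) + denom_exp (l - Suc i))"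
      have ex: "denom_exp l - 1 = ex + (denom_exp (Suc i) + denom_exp (l - Suc i))"
        unfolding ex_def using denom_exp_split[OF i] by (rule le_add_diff_inverse2[symmetric])
      have IH: "Mcone_poly r m s (denom_exp j + 1) (\<lambda>a. shear r s a 0 ^ denom_exp j * shear r s a j)"
        if "j < l" for j
        using less.IH that less.prems by auto
      have P: "Mcone_poly r m s (ex + (denom_exp (Suc i) + 1) + (denom_exp (l - Suc i) + 1))
          (\<lambda>a. shear r s a 0 ^ ex * (shear r s a 0 ^ denom_exp (Suc i) * shear r s a (Suc i))
             * (shear r s a 0 ^ denom_exp (l - Suc i) * shear r s a (l - Suc i)))"
        using i by (intro Mcone_poly_mult[OF Mcone_poly_mult[OF Mcone_poly_shear_0_power[OF m(1)]]] IH) auto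
      have "(2::nat)^1 \<le> 2^l" using l m by (intro power_increasing) auto
      then have "1 \<le> denom_exp l" unfolding denom_exp_def by simp
      then have D: "ex + (denom_exp (Suc i) + 1) + (denom_exp (l - Suc i) + 1) \<le> denom_exp l + 1"
        using ex by linarith
      have eq: "shear r s a 0 ^ (denom_exp l - 1) * shear r s a (Suc i) * shear r s a (l - Suc i)
          = shear r s a 0 ^ ex * (shear r s a 0 ^ denom_exp (Suc i) * shear r s a (Suc i))
            * (shear r s a 0 ^ denom_exp (l - Suc i) * shear r s a (l - Suc i))" for a
        unfolding ex by (simp add: power_add mult_ac)
      show ?thesis unfolding eq by (rule Mcone_poly_mono[OF P D])
    qed
    then have "Mcone_poly r m s (denom_exp l + 1)
        (\<lambda>a. \<Sum>i<l - 1. - of_int (tv_coeff r m (Suc i) (l - Suc i)) / (2 * of_nat (ff r (2*m) * ff l (2*m)))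
          * (shear r s a 0 ^ (denom_exp l - 1) * shear r s a (Suc i) * shear r s a (l - Suc i)))"
      by (intro Mcone_poly_sum Mcone_poly_scale) auto
    then show ?thesis
      by (rule Mcone_poly_cong) (use Mcone_shear_solve[OF _ m(1) l less.prems] in auto)
  qed
qed

lemma Mcone_poly_coord:
  assumes m: "0 < m" "2*m \<le> r"
  shows "u \<le> r \<Longrightarrow> Mcone_poly r m s (denom_exp r + 1) (\<lambda>a. shear r s a 0 ^ denom_exp r * a u)"
proof (induction "r - u" arbitrary: u rule: less_induct)
  case less
  have u: "u \<le> r" by (rule less.prems)
  have "Mcone_poly r m s ((denom_exp r - denom_exp u) + (denom_exp u + 1))
      (\<lambda>a. shear r s a 0 ^ (denom_exp r - denom_exp u) * (shear r s a 0 ^ denom_exp u * shear r s a u))"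
    by (rule Mcone_poly_mult[OF Mcone_poly_shear_0_power[OF m(1)] Mcone_poly_shear[OF m u]])
  moreover have "(denom_exp r - denom_exp u) + (denom_exp u + 1) = denom_exp r + 1"
    using denom_exp_mono[OF u] by simp
  moreover have "shear r s a 0 ^ (denom_exp r - denom_exp u) * (shear r s a 0 ^ denom_exp u * shear r s a u)
      = shear r s a 0 ^ denom_exp r * shear r s a u" for a
    using denom_exp_mono[OF u] by (simp add: mult.assoc[symmetric] power_add[symmetric])
  ultimately have shear_u: "Mcone_poly r m s (denom_exp r + 1) (\<lambda>a. shear r s a 0 ^ denom_exp r * shear r s a u)"
    by simp
  have higher: "Mcone_poly r m s (denom_exp r + 1)
      (\<lambda>a. \<Sum>i\<in>{Suc u..r}. of_nat (i choose u) * s ^ (i - u) * (shear r s a 0 ^ denom_exp r * a i))"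
  proof (rule Mcone_poly_sum)
    fix i assume "i \<in> {Suc u..r}"
    then have "r - i < r - u" "i \<le> r" by auto
    then have "Mcone_poly r m s (denom_exp r + 1) (\<lambda>a. shear r s a 0 ^ denom_exp r * a i)"
      using less.hyps by blast
    from Mcone_poly_scale[OF this, where c="of_nat (i choose u) * s ^ (i - u)"]
    show "Mcone_poly r m s (denom_exp r + 1)
        (\<lambda>a. of_nat (i choose u) * s ^ (i - u) * (shear r s a 0 ^ denom_exp r * a i))"
      by (simp add: mult.assoc)
  qed simp
  have "Mcone_poly r m s (denom_exp r + 1) (\<lambda>a. shear r s a 0 ^ denom_exp r * shear r s a u + (-1) *
      (\<Sum>i\<in>{Suc u..r}. of_nat (i choose u) * s ^ (i - u) * (shear r s a 0 ^ denom_exp r * a i)))"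
    by (intro Mcone_poly_add shear_u Mcone_poly_scale higher)
  moreover have "shear r s a 0 ^ denom_exp r * shear r s a u + (-1) *
      (\<Sum>i\<in>{Suc u..r}. of_nat (i choose u) * s ^ (i - u) * (shear r s a 0 ^ denom_exp r * a i))
      = shear r s a 0 ^ denom_exp r * a u" for a
    unfolding shear_split[OF u, of s a] by (simp add: algebra_simps sum_distrib_left sum_negf)
  ultimately show ?case by simp
qed

lemma Mcone_poly_gen_poly:
  assumes m: "0 < m" "2*m \<le> r"
  shows "gen_poly coord_funs t f
    \<Longrightarrow> Mcone_poly r m s (t * (denom_exp r + 1)) (\<lambda>a. shear r s a 0 ^ (t * denom_exp r) * f a)"
proof (induction rule: gen_poly.induct)
  case (const t c)
  from Mcone_poly_mono[OF Mcone_poly_scale[OF Mcone_poly_shear_0_power[OF m(1)], where c=c]]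
  show ?case by (simp add: mult.commute)
next
  case (add t f g)
  from Mcone_poly_add[OF add.IH] show ?case by (simp add: distrib_left)
next
  case (mult v t f)
  from mult.hyps(1) obtain i where v: "v = (\<lambda>a. a i)" unfolding coord_funs_def by auto
  have hv: "Mcone_poly r m s (denom_exp r + 1) (\<lambda>a. shear r s a 0 ^ denom_exp r * v a)"
  proof (cases "i \<le> r")
    case True
    then show ?thesis unfolding v by (rule Mcone_poly_coord[OF m])
  next
    case False
    then have "\<forall>a\<in>Mcone r m. 0 = shear r s a 0 ^ denom_exp r * v a"
      unfolding v Mcone_def bform_space_def by auto
    with Mcone_poly_const show ?thesis by (rule Mcone_poly_cong)
  qed
  have deg: "denom_exp r + 1 + t * (denom_exp r + 1) = Suc t * (denom_exp r + 1)" by simp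
  have eq: "shear r s a 0 ^ denom_exp r * v a * (shear r s a 0 ^ (t * denom_exp r) * f a)
      = shear r s a 0 ^ (Suc t * denom_exp r) * (v a * f a)" for a
    by (simp add: power_add mult_ac)
  from Mcone_poly_mult[OF hv mult.IH] show ?case unfolding deg eq .
next
  case (lift t f)
  have eq: "shear r s a 0 ^ denom_exp r * (shear r s a 0 ^ (t * denom_exp r) * f a)
      = shear r s a 0 ^ (Suc t * denom_exp r) * f a" for a
    by (simp add: power_add mult_ac)
  from Mcone_poly_mult[OF Mcone_poly_shear_0_power[OF m(1), where n="denom_exp r"] lift.IH]
  show ?case unfolding eq by (rule Mcone_poly_mono) simp
qed

lemma gen_poly_shear: "gen_poly coord_funs 1 (\<lambda>a. shear r s a u)"
  unfolding shear_def
proof (rule gen_poly_sum)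
  fix i
  have "gen_poly coord_funs 1 (\<lambda>a. a i)" by (rule gen_poly_generator) (auto simp: coord_funs_def)
  from gen_poly_scale[OF this, of "of_nat (i choose u) * s ^ (i - u)"]
  show "gen_poly coord_funs 1 (\<lambda>a. of_nat (i choose u) * s ^ (i - u) * a i)" .
qed simp

lemma Mcone_monomial_comb:
  assumes m: "0 < m" "2*m \<le> r" and f: "gen_poly coord_funs t f"
  shows "\<exists>c. \<forall>a\<in>Mcone r m. shear r s a 0 ^ (t * denom_exp r) * f a
    = (\<Sum>\<alpha>\<in>exponents (2*m) (t * (denom_exp r + 1)). c \<alpha> * (\<Prod>u<2*m. shear r s a u ^ \<alpha> u))"
proof -
  obtain g where g: "gen_poly (shear_coords r m s) (t * (denom_exp r + 1)) g"
    "\<forall>a\<in>Mcone r m. shear r s a 0 ^ (t * denom_exp r) * f a = g a"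
    using Mcone_poly_gen_poly[OF m f] unfolding Mcone_poly_def by blast
  from gen_poly_monomial_comb[OF g(1)[unfolded shear_coords_def]] obtain c
    where "\<forall>a. g a = (\<Sum>\<alpha>\<in>exponents (2*m) (t * (denom_exp r + 1)). c \<alpha> * (\<Prod>u<2*m. shear r s a u ^ \<alpha> u))"
    by blast
  with g(2) show ?thesis by (intro exI[of _ c]) auto
qed

lemma indep_polys_on_Mcone_le:
  assumes m: "0 < m" "2*m \<le> r" and Z: "zar_irred r Z" "Z \<subseteq> Mcone r m"
    and H: "indep_polys_on Z t n"
  shows "n \<le> (t * (denom_exp r + 1) + 1) ^ (2*m)"
proof -
  from H obtain h where h: "\<forall>j<n. gen_poly coord_funs t (h j)" "indep_on Z h n"
    unfolding indep_polys_on_def by blast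
  show ?thesis
  proof (cases "Z \<subseteq> {\<lambda>_. 0}")
    case True
    have "n \<le> 1" by (rule indep_on_singleton_le[OF True h(2)])
    also have "1 \<le> (t * (denom_exp r + 1) + 1) ^ (2*m)" by (rule one_le_power) simp
    finally show ?thesis .
  next
    case False
    then obtain a0 where a0: "a0 \<in> Z" "a0 \<noteq> (\<lambda>_. 0)" by auto
    have "a0 \<in> bform_space r" using a0 Z unfolding Mcone_def by auto
    from ex_shear_0_neq_0[OF this a0(2)] obtain s where s: "shear r s a0 0 \<noteq> 0" by blast
    define D where "D = t * (denom_exp r + 1)"
    define N where "N = t * denom_exp r"
    define h' where "h' j a = shear r s a 0 ^ N * h j a" for j a
    have "\<forall>j<n. \<exists>c. \<forall>x\<in>Z. h' j x = (\<Sum>\<alpha>\<in>exponents (2*m) D. c \<alpha> * (\<Prod>u<2*m. shear r s x u ^ \<alpha> u))"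
      using Mcone_monomial_comb[OF m, of t _ s] h(1) Z(2) unfolding h'_def D_def N_def by blast
    moreover have "indep_on Z h' n"
      unfolding indep_on_def
    proof (rule allI, rule impI)
      fix d assume d: "\<forall>x\<in>Z. (\<Sum>j<n. d j * h' j x) = 0"
      have "gen_poly coord_funs t (\<lambda>a. \<Sum>j<n. d j * h j a)"
        using h(1) by (intro gen_poly_sum gen_poly_scale) auto
      note g = gen_poly_coord_funs_imp_poly_fun[OF this]
      have f: "(\<lambda>a. shear r s a 0 ^ N) \<in> poly_fun"
        by (rule gen_poly_coord_funs_imp_poly_fun[OF gen_poly_power[OF gen_poly_shear]])
      have fg: "\<forall>x\<in>Z. shear r s x 0 ^ N * (\<Sum>j<n. d j * h j x) = 0"
        using d unfolding h'_def by (simp add: sum_distrib_left mult_ac)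
      have "\<exists>x\<in>Z. shear r s x 0 ^ N \<noteq> 0" using a0 s by auto
      from zar_irred_mult_eq_0D[OF Z(1) f g fg this]
      have "\<forall>x\<in>Z. (\<Sum>j<n. d j * h j x) = 0" .
      then show "\<forall>j<n. d j = 0" using h(2) unfolding indep_on_def by blast
    qed
    ultimately have "n \<le> card (exponents (2*m) D)"
      by (rule indep_on_card_le[OF finite_exponents])
    then show ?thesis unfolding card_exponents D_def by simp
  qed
qed

lemma Mcone_0_imp_zero:
  assumes a: "a \<in> Mcone r 0"
  shows "a = (\<lambda>_. 0)"
proof (rule ccontr)
  assume "a \<noteq> (\<lambda>_. 0)"
  moreover have "a \<in> bform_space r" using a unfolding Mcone_def by auto
  ultimately obtain s where s: "shear r s a 0 \<noteq> 0" using ex_shear_0_neq_0 by blast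
  have "transv r 0 (shear r s a) 0 = 0" using shear_in_Mcone[OF a] unfolding Mcone_def by auto
  moreover have "transv r 0 (shear r s a) 0 = of_int (tv_coeff r 0 0 0) * shear r s a 0 * shear r s a 0"
    using transv_eq_convolution[of 0 r 0 "shear r s a"] by simp
  moreover have "tv_coeff r 0 0 0 = 1" using tv_coeff_0_left[of 0 0 r] by (simp add: ff_def)
  ultimately show False using s by simp
qed

lemma irred_chain_Mcone_le:
  assumes "2*m \<le> r" and ch: "irred_chain r (Mcone r m) k"
  shows "k \<le> 2*m"
proof (cases "m = 0")
  case True
  show ?thesis
  proof (rule ccontr)
    assume "\<not> k \<le> 2*m"
    then have "0 < k" by simp
    from ch obtain Z where Z: "\<forall>i\<le>k. zar_irred r (Z i) \<and> Z i \<subseteq> Mcone r m" "\<forall>i<k. Z i \<subset> Z (Suc i)"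
      unfolding irred_chain_def by blast
    then have "zar_irred r (Z 0)" "Z 1 \<subseteq> Mcone r 0" "Z 0 \<subset> Z 1"
      using \<open>0 < k\<close> True by (auto simp: Suc_le_eq)
    moreover have "Z 0 \<noteq> {}" using \<open>zar_irred r (Z 0)\<close> unfolding zar_irred_def by blast
    ultimately show False using Mcone_0_imp_zero by blast
  qed
next
  case False
  have "n \<le> (t * (denom_exp r + 1) + 1) ^ (2*m)"
    if "zar_irred r Z" "Z \<subseteq> Mcone r m" "indep_polys_on Z t n" for Z t n
    using indep_polys_on_Mcone_le[OF _ assms(1) that] False by blast
  from irred_chain_le_of_indep_polys_bound[OF this ch] show ?thesis .
qed

lemma proj_dim_le:
  assumes "\<And>k. irred_chain r C k \<Longrightarrow> k \<le> K"
  shows "proj_dim r C \<le> ereal (real K) - 1"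
  unfolding proj_dim_def
proof (rule Sup_least)
  fix x assume "x \<in> {-1} \<union> {ereal (real k) - 1 | k. irred_chain r C k}"
  then show "x \<le> ereal (real K) - 1"
    using assms by (auto simp: one_ereal_def)
qed

theorem mainTheorem7:
  fixes r m :: nat
  assumes "r \<ge> 2" and "2 * m \<le> r"
  shows "proj_dim r (Mcone r m) < ereal (real (2 * m)) \<and> (m = 0 \<longrightarrow> Mpts r m = {})"
proof
  have "proj_dim r (Mcone r m) \<le> ereal (real (2 * m)) - 1"
    using irred_chain_Mcone_le[OF assms(2)] by (rule proj_dim_le)
  also have "\<dots> < ereal (real (2 * m))" by (simp add: one_ereal_def)
  finally show "proj_dim r (Mcone r m) < ereal (real (2 * m))" .
  show "m = 0 \<longrightarrow> Mpts r m = {}"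
    using Mcone_0_imp_zero unfolding Mpts_def by blast
qed
end
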